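(* For every $n\ge1$, $\mathbb E[|C(X_1^n)|]\le\frac32n$, with equality if and only if $n=1$. That is, $\mathbb E[|C(X_1)|]=\frac32$ and $\mathbb E[|C(X_1^n)|]<\frac32 n$ for all $n\ge2$.
   Context: Let $\mathcal X=\{A,B,C,D\}$ and let $(X_i)_{i\ge1}$ be the first-order Markov chain on $\mathcal X$ with $\mathbb P(X_1=x)=1/4$ for all $x$ and transitions: from $A$ to $A$ or $C$ w.p. $1/2$ each; from $B$ to $B$ or $D$ w.p. $1/2$ each; from $C$ and from $D$ to each of $A,B,C,D$ w.p. $1/4$. A nonempty string is admissible if all consecutive transitions have positive probability; $\mathcal A$ is the set of admissible nonempty strings; $K(u):=-\log_2\mathbb P(X_1^m=u)$ for $u=x_1^m\in\mathcal A$. Shortlex source code $C:\mathcal A\to\{0,1\}^+$: order nonempty binary strings by length then lexicographically as $b_1,b_2,\dots$; order $\mathcal A$ as $u_1,u_2,\dots$ by increasing $K$, then increasing length, then lexicographically with $A<B<C<D$; set $C(u_j):=b_j$ (the code $C$ is distinct from the symbol $C$). $|w|$ is the length of a binary string $w$. *)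

theory Defs
  imports Complex_Main
begin

datatype sym = A | B | C | D

definition sym_idx :: "sym \<Rightarrow> nat" where
  "sym_idx x = (case x of A \<Rightarrow> 0 | B \<Rightarrow> 1 | C \<Rightarrow> 2 | D \<Rightarrow> 3)"

definition trans_p :: "sym \<Rightarrow> sym \<Rightarrow> real" where
  "trans_p x y = (case x of
      A \<Rightarrow> (if y = A \<or> y = C then 1/2 else 0)
    | B \<Rightarrow> (if y = B \<or> y = D then 1/2 else 0)
    | C \<Rightarrow> 1/4
    | D \<Rightarrow> 1/4)"

fun path_prob :: "sym \<Rightarrow> sym list \<Rightarrow> real" where
  "path_prob x [] = 1"
| "path_prob x (y # ys) = trans_p x y * path_prob y ys"

fun str_prob :: "sym list \<Rightarrow> real" where
  "str_prob [] = 1"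
| "str_prob (x # xs) = 1/4 * path_prob x xs"

definition admissible :: "sym list \<Rightarrow> bool" where
  "admissible u \<longleftrightarrow> u \<noteq> [] \<and>
     (\<forall>i. Suc i < length u \<longrightarrow> trans_p (u ! i) (u ! Suc i) > 0)"

definition K :: "sym list \<Rightarrow> real" where
  "K u = - log 2 (str_prob u)"

definition src_less :: "sym list \<Rightarrow> sym list \<Rightarrow> bool" where
  "src_less u v \<longleftrightarrow> K u < K v \<or>
     (K u = K v \<and> (length u < length v \<or>
        (length u = length v \<and> (u, v) \<in> lexord {(a, b). sym_idx a < sym_idx b})))"

definition bin_less :: "bool list \<Rightarrow> bool list \<Rightarrow> bool" where
  "bin_less w z \<longleftrightarrow> length w < length z \<or>
     (length w = length z \<and> (w, z) \<in> lexord {(False, True)})"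

text \<open>Shortlex source code: u_j (j-th admissible string) is mapped to b_j
  (j-th nonempty binary string); j-1 = number of strictly smaller elements.\<close>
definition code :: "sym list \<Rightarrow> bool list" where
  "code u = (THE w. w \<noteq> [] \<and>
     card {z. z \<noteq> [] \<and> bin_less z w} = card {v. admissible v \<and> src_less v u})"

definition expected_len :: "nat \<Rightarrow> real" where
  "expected_len n = (\<Sum>u\<in>{u::sym list. length u = n}. str_prob u * real (length (code u)))"

end

(*
  An admissible string u has probability 2^-K(u) with K(u) = |u| + 1 + d(u), where d(u) counts the
  steps leaving C or D; so K is an integer and d(X_1^n) is binomial(n - 1, 1/2), which gives
  E[K] = (3n + 1)/2. The numbers T_k of admissible strings with K = k satisfy
  T_k + T_(k+1) = 2^(k+1), and this places the class K = k exactly at the shortlex ranks r with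
  2^k - T_k/2 <= r + 2 < 2^k + T_k/2: the first half of every class gets codewords of length K - 1,
  the second half codewords of length K. Hence E|C(X_1^n)| = (3n + 1)/2 - P(short), and it remains
  to show P(short) >= 1/2 with equality only for n = 1. Within a class shorter strings come first,
  so all strings of length n with d(u) above the median are short, which accounts for probability
  1/2 up to the median term. The median blocks are controlled by the surplus of short codewords,
  which satisfies a Pascal-type recursion; along the diagonal it is negative for even n - 1 >= 2 and
  positive for odd n - 1, and either sign pushes P(short) strictly above 1/2.
*)

theory Submission
  imports Defs "HOL-Library.Discrete_Functions"
begin

section \<open>Admissible strings\<close>

definition is_CD :: "sym \<Rightarrow> bool" where
  "is_CD x \<longleftrightarrow> x = C \<or> x = D"

lemma is_CD_simps [simp]: "\<not> is_CD A" "\<not> is_CD B" "is_CD C" "is_CD D"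
  by (simp_all add: is_CD_def)

definition cd_steps :: "sym list \<Rightarrow> nat" where
  "cd_steps u = length (filter is_CD (butlast u))"

(* Each step out of C or D costs two bits, each step out of A or B one bit, the uniform start two. *)
definition K_nat :: "sym list \<Rightarrow> nat" where
  "K_nat u = length u + 1 + cd_steps u"

lemma cd_steps_singleton [simp]: "cd_steps [x] = 0"
  by (simp add: cd_steps_def)

lemma cd_steps_Cons_Cons: "cd_steps (x # y # ys) = (if is_CD x then 1 else 0) + cd_steps (y # ys)"
  by (simp add: cd_steps_def)

lemma cd_steps_less_length: "u \<noteq> [] \<Longrightarrow> cd_steps u < length u"
proof -
  assume "u \<noteq> []"
  then have "length (butlast u) < length u" by simp
  then show ?thesis unfolding cd_steps_def using length_filter_le[of is_CD "butlast u"] by linarith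
qed

lemma admissible_singleton [simp]: "admissible [x]"
  by (simp add: admissible_def)

lemma admissible_Cons_Cons:
  "admissible (x # y # ys) \<longleftrightarrow> trans_p x y > 0 \<and> admissible (y # ys)"
  unfolding admissible_def by (auto simp: less_Suc_eq_0_disj)

lemma admissible_nonempty: "admissible u \<Longrightarrow> u \<noteq> []"
  by (simp add: admissible_def)

lemma trans_p_pos: "trans_p x y > 0 \<Longrightarrow> trans_p x y = (if is_CD x then 1/4 else 1/2)"
  by (cases x; cases y; simp add: trans_p_def)

lemma trans_p_nonpos: "\<not> trans_p x y > 0 \<Longrightarrow> trans_p x y = 0"
  by (cases x; cases y; simp add: trans_p_def)

lemma path_prob_eq:
  "path_prob x w = (if admissible (x # w) then (1/2) ^ (length w + cd_steps (x # w)) else 0)"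
proof (induction w arbitrary: x)
  case (Cons y ys)
  show ?case
  proof (cases "trans_p x y > 0")
    case True
    then show ?thesis
      using Cons.IH[of y] trans_p_pos[OF True]
      by (simp add: admissible_Cons_Cons cd_steps_Cons_Cons power_add)
  next
    case False
    then show ?thesis by (simp add: trans_p_nonpos admissible_Cons_Cons)
  qed
qed simp

lemma str_prob_eq:
  "u \<noteq> [] \<Longrightarrow> str_prob u = (if admissible u then (1/2) ^ K_nat u else 0)"
  by (cases u) (auto simp: path_prob_eq K_nat_def power_add)

lemma K_eq_K_nat: "admissible u \<Longrightarrow> K u = real (K_nat u)"
  by (simp add: K_def str_prob_eq admissible_nonempty power_one_over log_divide)

lemma UNIV_sym: "(UNIV :: sym set) = {A, B, C, D}"
  using sym.exhaust by auto

lemma successors_eq: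
  "{y. trans_p A y > 0} = {A, C}" "{y. trans_p B y > 0} = {B, D}"
  "{y. trans_p C y > 0} = {A, B, C, D}" "{y. trans_p D y > 0} = {A, B, C, D}"
  using sym.exhaust by (auto simp: trans_p_def)

instance sym :: finite
  by standard (simp add: UNIV_sym)

lemma finite_lists_length_le_sym: "finite {u :: sym list. length u \<le> n}"
  using finite_lists_length_le[of "UNIV :: sym set" n] by simp

definition block :: "nat \<Rightarrow> nat \<Rightarrow> sym list set" where
  "block n d = {u. admissible u \<and> length u = n \<and> cd_steps u = d}"

definition paths_from :: "sym \<Rightarrow> nat \<Rightarrow> nat \<Rightarrow> sym list set" where
  "paths_from x m d = {w. length w = m \<and> admissible (x # w) \<and> cd_steps (x # w) = d}"

lemma finite_paths_from: "finite (paths_from x m d)"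
  by (rule finite_subset[OF _ finite_lists_length_le_sym[of m]]) (auto simp: paths_from_def)

lemma paths_from_0: "paths_from x 0 d = (if d = 0 then {[]} else {})"
  by (auto simp: paths_from_def)

lemma paths_from_Suc:
  "paths_from x (Suc m) (d + (if is_CD x then 1 else 0)) =
     (\<Union>y\<in>{y. trans_p x y > 0}. (#) y ` paths_from y m d)"
proof (rule set_eqI)
  fix w
  show "w \<in> paths_from x (Suc m) (d + (if is_CD x then 1 else 0)) \<longleftrightarrow>
      w \<in> (\<Union>y\<in>{y. trans_p x y > 0}. (#) y ` paths_from y m d)"
    by (cases w) (auto simp: paths_from_def admissible_Cons_Cons cd_steps_Cons_Cons)
qed

lemma paths_from_Suc_CD_0: "is_CD x \<Longrightarrow> paths_from x (Suc m) 0 = {}"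
  unfolding paths_from_def by (auto simp: length_Suc_conv cd_steps_Cons_Cons)

lemma card_paths_from_Suc_eq_sum:
  "card (paths_from x (Suc m) (d + (if is_CD x then 1 else 0))) =
     (\<Sum>y\<in>{y. trans_p x y > 0}. card (paths_from y m d))"
  unfolding paths_from_Suc
  by (subst card_UN_disjoint) (auto simp: finite_paths_from card_image)

lemma card_paths_from_Suc:
  "card (paths_from x (Suc m) d) =
     (if \<not> is_CD x then 2 ^ (d + 1) * (m choose d)
      else if d = 0 then 0 else 2 ^ (d + 1) * (m choose (d - 1)))"
proof (induction m arbitrary: x d)
  case 0
  show ?case
  proof (cases "is_CD x")
    case True
    then show ?thesis
      using card_paths_from_Suc_eq_sum[of x 0 "d - 1"]
      by (cases d) (auto simp: paths_from_0 paths_from_Suc_CD_0 is_CD_def successors_eq)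
  next
    case False
    then show ?thesis
      using card_paths_from_Suc_eq_sum[of x 0 d]
      by (cases x) (auto simp: paths_from_0 successors_eq)
  qed
next
  case (Suc m)
  show ?case
  proof (cases "is_CD x")
    case True
    show ?thesis
    proof (cases d)
      case (Suc d')
      have "card (paths_from x (Suc (Suc m)) d) = (\<Sum>y\<in>{A, B, C, D}. card (paths_from y (Suc m) d'))"
        using card_paths_from_Suc_eq_sum[of x "Suc m" d'] True Suc by (auto simp: is_CD_def successors_eq)
      also have "\<dots> = 2 ^ (d' + 2) * (Suc m choose d')"
        by (cases d') (simp_all add: Suc.IH algebra_simps)
      finally show ?thesis using True Suc by simp
    qed (simp add: True paths_from_Suc_CD_0)
  next
    case False
    then have "x = A \<or> x = B" by (cases x) auto
    then have "card (paths_from x (Suc (Suc m)) d) =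
        card (paths_from x (Suc m) d) + card (paths_from (if x = A then C else D) (Suc m) d)"
      using card_paths_from_Suc_eq_sum[of x "Suc m" d] by (auto simp: successors_eq)
    also have "\<dots> = 2 ^ (d + 1) * (Suc m choose d)"
      using False by (cases d) (auto simp: Suc.IH algebra_simps)
    finally show ?thesis using False by simp
  qed
qed

lemma block_eq_UN_paths_from: "block (Suc m) d = (\<Union>x. (#) x ` paths_from x m d)"
proof (rule set_eqI)
  fix u
  show "u \<in> block (Suc m) d \<longleftrightarrow> u \<in> (\<Union>x. (#) x ` paths_from x m d)"
    by (cases u) (auto simp: block_def paths_from_def)
qed

lemma card_block_Suc: "card (block (Suc m) d) = 2 ^ (d + 2) * (m choose d)"
proof -
  have "card (block (Suc m) d) = (\<Sum>x\<in>{A, B, C, D}. card (paths_from x m d))"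
    unfolding block_eq_UN_paths_from UNIV_sym
    by (subst card_UN_disjoint) (auto simp: finite_paths_from card_image)
  also have "\<dots> = 2 ^ (d + 2) * (m choose d)"
    by (cases m; cases d) (simp_all add: card_paths_from_Suc paths_from_0 algebra_simps)
  finally show ?thesis .
qed

section \<open>Shortlex ranks\<close>

lemma bij_betw_rank:
  fixes less :: "'a \<Rightarrow> 'a \<Rightarrow> bool"
  assumes fin: "finite S"
    and irrefl: "\<And>x. \<not> less x x"
    and trans: "\<And>x y z. less x y \<Longrightarrow> less y z \<Longrightarrow> less x z"
    and total: "\<And>x y. x \<in> S \<Longrightarrow> y \<in> S \<Longrightarrow> x \<noteq> y \<Longrightarrow> less x y \<or> less y x"
  shows "bij_betw (\<lambda>x. card {y\<in>S. less y x}) S {..<card S}"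
proof -
  let ?rank = "\<lambda>x. card {y\<in>S. less y x}"
  have rank_less: "?rank x < ?rank y" if "x \<in> S" "less x y" for x y
  proof (rule psubset_card_mono)
    show "finite {z\<in>S. less z y}"
      using fin by simp
    show "{z\<in>S. less z x} \<subset> {z\<in>S. less z y}"
      using that irrefl trans by blast
  qed
  have "inj_on ?rank S"
  proof (rule inj_onI)
    fix x y assume "x \<in> S" "y \<in> S" "?rank x = ?rank y"
    then show "x = y"
      using total[of x y] rank_less[of x y] rank_less[of y x] by fastforce
  qed
  moreover have "?rank x < card S" if "x \<in> S" for x
    using fin irrefl that by (intro psubset_card_mono) auto
  then have "?rank ` S \<subseteq> {..<card S}"
    by auto
  ultimately have "?rank ` S = {..<card S}"
    by (simp add: card_image card_subset_eq)
  with \<open>inj_on ?rank S\<close> show ?thesis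
    by (simp add: bij_betw_def)
qed

lemma bin_less_irrefl: "\<not> bin_less w w"
  unfolding bin_less_def using lexord_irreflexive[of "{(False, True)}" w] by auto

lemma bin_less_trans: "bin_less x y \<Longrightarrow> bin_less y z \<Longrightarrow> bin_less x z"
  unfolding bin_less_def using lexord_trans[of x y "{(False, True)}" z] by (auto simp: trans_def)

lemma bin_less_total: "x \<noteq> y \<Longrightarrow> bin_less x y \<or> bin_less y x"
  unfolding bin_less_def using lexord_linear[of "{(False, True)}" x y] by auto

definition nonempty_upto :: "nat \<Rightarrow> bool list set" where
  "nonempty_upto L = {z. z \<noteq> [] \<and> length z \<le> L}"

lemma finite_nonempty_upto: "finite (nonempty_upto L)"
  unfolding nonempty_upto_def using finite_lists_length_le[of "UNIV :: bool set" L] by simp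

lemma card_nonempty_upto: "card (nonempty_upto L) = 2 ^ (L + 1) - 2"
proof (induction L)
  case 0
  have "nonempty_upto 0 = {}" by (auto simp: nonempty_upto_def)
  then show ?case by simp
next
  case (Suc L)
  have "nonempty_upto (Suc L) = nonempty_upto L \<union> {w. length w = Suc L}"
    by (auto simp: nonempty_upto_def)
  moreover have "nonempty_upto L \<inter> {w. length w = Suc L} = {}"
    by (auto simp: nonempty_upto_def)
  moreover have "card {w :: bool list. length w = Suc L} = 2 ^ Suc L"
    using card_lists_length_eq[of "UNIV :: bool set" "Suc L"] by simp
  moreover have "(2::nat) \<le> 2 ^ (L + 1)"
    by simp
  ultimately show ?case
    using Suc finite_nonempty_upto[of L] finite_lists_length_eq[of "UNIV :: bool set" "Suc L"]
    by (simp add: card_Un_disjoint)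
qed

definition bin_rank :: "bool list \<Rightarrow> nat" where
  "bin_rank w = card {z. z \<noteq> [] \<and> bin_less z w}"

lemma bin_rank_eq_rank_in_nonempty_upto:
  "w \<in> nonempty_upto L \<Longrightarrow> bin_rank w = card {z \<in> nonempty_upto L. bin_less z w}"
proof -
  assume "w \<in> nonempty_upto L"
  then have "{z. z \<noteq> [] \<and> bin_less z w} = {z \<in> nonempty_upto L. bin_less z w}"
    by (auto simp: nonempty_upto_def bin_less_def)
  then show ?thesis
    by (simp add: bin_rank_def)
qed

lemma bij_betw_bin_rank: "bij_betw bin_rank (nonempty_upto L) {..<2 ^ (L + 1) - 2}"
proof -
  have "bij_betw (\<lambda>w. card {z \<in> nonempty_upto L. bin_less z w})
      (nonempty_upto L) {..<card (nonempty_upto L)}"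
    using finite_nonempty_upto bin_less_irrefl bin_less_trans bin_less_total by (rule bij_betw_rank)
  then show ?thesis
    unfolding card_nonempty_upto
    by (rule bij_betw_cong[THEN iffD1, rotated]) (simp add: bin_rank_eq_rank_in_nonempty_upto)
qed

lemma bin_rank_ex1: "\<exists>!w. w \<noteq> [] \<and> bin_rank w = r"
proof -
  have "r < 2 ^ (r + 2) - 2"
    using less_exp[of "r + 1"] by simp
  then have "r \<in> bin_rank ` nonempty_upto (r + 1)"
    using bij_betw_bin_rank[of "r + 1"] by (simp add: bij_betw_def)
  then obtain w where w: "w \<in> nonempty_upto (r + 1)" "bin_rank w = r"
    by blast
  show ?thesis
  proof (rule ex1I[of _ w])
    show "w \<noteq> [] \<and> bin_rank w = r"
      using w by (simp add: nonempty_upto_def)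
    fix w' assume w': "w' \<noteq> [] \<and> bin_rank w' = r"
    let ?L = "max (length w) (length w')"
    have "w \<in> nonempty_upto ?L" "w' \<in> nonempty_upto ?L"
      using w w' by (auto simp: nonempty_upto_def)
    moreover have "inj_on bin_rank (nonempty_upto ?L)"
      using bij_betw_bin_rank[of ?L] by (simp add: bij_betw_def)
    ultimately show "w' = w"
      using w w' by (auto dest: inj_onD)
  qed
qed

lemma floor_log_bin_rank: "w \<noteq> [] \<Longrightarrow> floor_log (bin_rank w + 2) = length w"
proof (rule floor_log_eqI)
  assume "w \<noteq> []"
  then have "nonempty_upto (length w - 1) \<subseteq> {z. z \<noteq> [] \<and> bin_less z w}"
    by (cases w) (auto simp: nonempty_upto_def bin_less_def)
  moreover have "{z. z \<noteq> [] \<and> bin_less z w} \<subseteq> nonempty_upto (length w) - {w}"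
    using bin_less_irrefl by (auto simp: nonempty_upto_def bin_less_def)
  moreover have "finite (nonempty_upto (length w) - {w})"
    by (simp add: finite_nonempty_upto)
  ultimately have "card (nonempty_upto (length w - 1)) \<le> bin_rank w"
    and "bin_rank w \<le> card (nonempty_upto (length w) - {w})"
    unfolding bin_rank_def by (auto intro: card_mono finite_subset)
  moreover have "w \<in> nonempty_upto (length w)" "(2::nat) ^ (length w - 1 + 1) = 2 ^ length w"
    using \<open>w \<noteq> []\<close> by (auto simp: nonempty_upto_def)
  moreover have "(2::nat) \<le> 2 ^ length w"
    using \<open>w \<noteq> []\<close> by (cases w) auto
  ultimately show "2 ^ length w \<le> bin_rank w + 2" "bin_rank w + 2 < 2 * 2 ^ length w"
    by (simp_all add: card_nonempty_upto finite_nonempty_upto)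
qed simp

definition src_rank :: "sym list \<Rightarrow> nat" where
  "src_rank u = card {v. admissible v \<and> src_less v u}"

lemma length_code: "length (code u) = floor_log (src_rank u + 2)"
proof -
  have "code u = (THE w. w \<noteq> [] \<and> bin_rank w = src_rank u)"
    unfolding code_def bin_rank_def src_rank_def ..
  then have "code u \<noteq> [] \<and> bin_rank (code u) = src_rank u"
    using theI'[OF bin_rank_ex1] by simp
  then show ?thesis
    using floor_log_bin_rank by metis
qed

section \<open>Information classes\<close>

definition class_count :: "nat \<Rightarrow> nat \<Rightarrow> nat" where
  "class_count k n = card {u. admissible u \<and> K_nat u = k \<and> length u \<le> n}"

definition class_card :: "nat \<Rightarrow> nat" where
  "class_card k = card {u. admissible u \<and> K_nat u = k}"

definition class_below :: "nat \<Rightarrow> nat" where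
  "class_below k = card {u. admissible u \<and> K_nat u < k}"

lemma finite_K_nat_less: "finite {u. admissible u \<and> K_nat u < k}"
  by (rule finite_subset[OF _ finite_lists_length_le_sym[of k]]) (auto simp: K_nat_def)

lemma finite_K_nat_eq: "finite {u. admissible u \<and> K_nat u = k}"
  by (rule finite_subset[OF _ finite_K_nat_less[of "Suc k"]]) auto

lemma class_count_0: "class_count k 0 = 0"
  by (simp add: class_count_def admissible_def)

lemma class_count_Suc:
  "class_count k (Suc n) =
     class_count k n + (if Suc n < k then 2 ^ (k - n) * (n choose (k - n - 2)) else 0)"
proof -
  have split: "{u. admissible u \<and> K_nat u = k \<and> length u \<le> Suc n} =
      {u. admissible u \<and> K_nat u = k \<and> length u \<le> n} \<union>
      (if Suc n < k then block (Suc n) (k - n - 2) else {})"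
    by (auto simp: block_def K_nat_def le_Suc_eq)
  have "finite {u. admissible u \<and> K_nat u = k \<and> length u \<le> n}"
    by (rule finite_subset[OF _ finite_K_nat_eq[of k]]) auto
  moreover have "finite (block (Suc n) d)" for d
    by (rule finite_subset[OF _ finite_lists_length_le_sym[of "Suc n"]]) (auto simp: block_def)
  moreover have "k - n - 2 + 2 = k - n" if "Suc n < k"
    using that by simp
  ultimately show ?thesis
    unfolding class_count_def split
    by (subst card_Un_disjoint) (auto simp: block_def K_nat_def card_block_Suc[unfolded block_def])
qed

lemma class_count_eq_class_card: "k \<le> Suc n \<Longrightarrow> class_count k n = class_card k"
proof -
  assume "k \<le> Suc n"
  then have "{u. admissible u \<and> K_nat u = k \<and> length u \<le> n} = {u. admissible u \<and> K_nat u = k}"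
    by (auto simp: K_nat_def)
  then show ?thesis
    by (simp add: class_count_def class_card_def)
qed

lemma class_below_Suc: "class_below (Suc k) = class_below k + class_card k"
proof -
  have split: "{u. admissible u \<and> K_nat u < Suc k} =
      {u. admissible u \<and> K_nat u < k} \<union> {u. admissible u \<and> K_nat u = k}"
    by auto
  show ?thesis
    unfolding class_below_def class_card_def split
    by (subst card_Un_disjoint) (auto simp: finite_K_nat_less finite_K_nat_eq)
qed

lemma class_count_Suc_Suc_Suc:
  "class_count (Suc (Suc (Suc k))) (Suc n) = class_count (Suc (Suc k)) n + 2 * class_count (Suc k) n"
proof (induction n)
  case 0
  show ?case by (simp add: class_count_Suc class_count_0)
next
  case (Suc n)
  consider "k < n" | "k = n" | j where "k = Suc (n + j)"
    using less_imp_Suc_add[of n k] by (cases "k < n"; cases "k = n") auto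
  then show ?case
  proof cases
    case 1
    then show ?thesis using Suc.IH by (simp add: class_count_Suc)
  next
    case 2
    then show ?thesis using Suc.IH by (simp add: class_count_Suc)
  next
    case 3
    have "(2::nat) ^ (3 + j) * (Suc n choose Suc j) =
        2 ^ (3 + j) * (n choose Suc j) + 8 * (2 ^ j * (n choose j))"
      by (simp add: power_add algebra_simps)
    then show ?thesis
      using Suc.IH 3 by (simp add: class_count_Suc)
  qed
qed

lemma class_card_0: "class_card 0 = 0"
  by (simp add: class_card_def K_nat_def)

lemma class_card_1: "class_card (Suc 0) = 0"
  by (simp add: class_card_def K_nat_def admissible_def)

lemma class_card_2: "class_card (Suc (Suc 0)) = 4"
  using class_count_eq_class_card[of "Suc (Suc 0)" "Suc 0"] by (simp add: class_count_Suc class_count_0)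

lemma class_card_Suc_Suc_Suc:
  "class_card (Suc (Suc (Suc k))) = class_card (Suc (Suc k)) + 2 * class_card (Suc k)"
  using class_count_Suc_Suc_Suc[of k "Suc k"] by (simp add: class_count_eq_class_card)

lemma class_card_add_Suc: "class_card (Suc k) + class_card (Suc (Suc k)) = 2 ^ (k + 2)"
proof (induction k)
  case (Suc k)
  then show ?case
    using class_card_Suc_Suc_Suc[of k] by simp
qed (simp add: class_card_1 class_card_2)

lemma class_card_le: "class_card k \<le> 2 ^ k"
proof (cases k)
  case (Suc k')
  then show ?thesis
    using class_card_add_Suc[of "k' - 1"] by (cases k') (simp_all add: class_card_1)
qed (simp add: class_card_0)

lemma class_below_eq: "2 * class_below (Suc k) + class_card (Suc k) + 4 = 2 ^ (k + 2)"
proof (induction k)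
  case 0
  show ?case by (simp add: class_below_Suc class_below_def class_card_0 class_card_1 K_nat_def)
next
  case (Suc k)
  then show ?case
    using class_card_add_Suc[of k] by (simp add: class_below_Suc)
qed

lemma even_class_count: "even (class_count k n)"
  by (induction n) (auto simp: class_count_0 class_count_Suc)

section \<open>Code lengths\<close>

definition lex_less :: "sym list \<Rightarrow> sym list \<Rightarrow> bool" where
  "lex_less v u \<longleftrightarrow> (v, u) \<in> lexord {(a, b). sym_idx a < sym_idx b}"

lemma src_less_iff:
  assumes "admissible v" "admissible u"
  shows "src_less v u \<longleftrightarrow> K_nat v < K_nat u \<or>
    (K_nat v = K_nat u \<and> (length v < length u \<or> (length v = length u \<and> lex_less v u)))"
  using assms by (simp add: src_less_def K_eq_K_nat lex_less_def)

lemma lex_less_irrefl: "\<not> lex_less u u"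
  unfolding lex_less_def by (rule lexord_irreflexive) simp

lemma lex_less_trans: "lex_less u v \<Longrightarrow> lex_less v w \<Longrightarrow> lex_less u w"
  unfolding lex_less_def using lexord_trans[of u v _ w] by (auto simp: trans_def)

lemma lex_less_total: "u \<noteq> v \<Longrightarrow> lex_less u v \<or> lex_less v u"
proof -
  have "sym_idx a < sym_idx b \<or> a = b \<or> sym_idx b < sym_idx a" for a b
    by (cases a; cases b) (simp_all add: sym_idx_def)
  then show "u \<noteq> v \<Longrightarrow> lex_less u v \<or> lex_less v u"
    unfolding lex_less_def using lexord_linear[of "{(a, b). sym_idx a < sym_idx b}" u v] by auto
qed

lemma src_less_irrefl: "admissible u \<Longrightarrow> \<not> src_less u u"
  by (simp add: src_less_iff lex_less_irrefl)

definition class_pos :: "sym list \<Rightarrow> nat" where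
  "class_pos u = card {v. admissible v \<and> K_nat v = K_nat u \<and> src_less v u}"

lemma src_rank_eq: "admissible u \<Longrightarrow> src_rank u = class_below (K_nat u) + class_pos u"
proof -
  assume u: "admissible u"
  have split: "{v. admissible v \<and> src_less v u} =
      {v. admissible v \<and> K_nat v < K_nat u} \<union> {v. admissible v \<and> K_nat v = K_nat u \<and> src_less v u}"
    using u by (auto simp: src_less_iff)
  show ?thesis
    unfolding src_rank_def class_below_def class_pos_def split
    by (subst card_Un_disjoint)
      (auto intro: finite_subset[OF _ finite_K_nat_less] finite_subset[OF _ finite_K_nat_eq])
qed

lemma class_pos_less: "admissible u \<Longrightarrow> class_pos u < class_card (K_nat u)"
  unfolding class_pos_def class_card_def
  by (rule psubset_card_mono) (use src_less_irrefl finite_K_nat_eq in blast)+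

lemma length_code_eq:
  assumes u: "admissible u"
  shows "length (code u) =
    (if 2 * class_pos u < class_card (K_nat u) then K_nat u - 1 else K_nat u)"
proof -
  define k where "k = K_nat u - 1"
  have K: "K_nat u = Suc k"
    using admissible_nonempty[OF u] by (cases u) (simp_all add: k_def K_nat_def)
  define r where "r = src_rank u"
  define p where "p = class_pos u"
  define T where "T = class_card (Suc k)"
  have half: "2 * (r + 2) + T = 2 ^ (k + 2) + 2 * p"
    using class_below_eq[of k] src_rank_eq[OF u] unfolding r_def p_def T_def K by simp
  have "T \<le> 2 ^ Suc k" "p < T"
    using class_card_le[of "Suc k"] class_pos_less[OF u] unfolding T_def p_def K by auto
  then have "floor_log (r + 2) = (if 2 * p < T then k else Suc k)"
    using half by (intro floor_log_eqI) auto
  then show ?thesis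
    by (simp add: length_code r_def p_def T_def K)
qed

lemma finite_block: "finite (block n d)"
  by (rule finite_subset[OF _ finite_lists_length_le_sym[of n]]) (auto simp: block_def)

lemma K_nat_block: "u \<in> block n d \<Longrightarrow> K_nat u = n + 1 + d"
  by (simp add: block_def K_nat_def)

definition block_lex_rank :: "nat \<Rightarrow> nat \<Rightarrow> sym list \<Rightarrow> nat" where
  "block_lex_rank n d u = card {v \<in> block n d. lex_less v u}"

lemma bij_betw_block_lex_rank:
  "bij_betw (block_lex_rank n d) (block n d) {..<card (block n d)}"
  unfolding block_lex_rank_def
  using finite_block lex_less_irrefl lex_less_trans lex_less_total by (rule bij_betw_rank)

lemma class_pos_block:
  assumes u: "u \<in> block (Suc m) d"
  shows "class_pos u = class_count (m + 2 + d) m + block_lex_rank (Suc m) d u"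
proof -
  have adm: "admissible u" and K: "K_nat u = m + 2 + d"
    using u K_nat_block[OF u] by (simp_all add: block_def)
  have split: "{v. admissible v \<and> K_nat v = K_nat u \<and> src_less v u} =
      {v. admissible v \<and> K_nat v = m + 2 + d \<and> length v \<le> m} \<union> {v \<in> block (Suc m) d. lex_less v u}"
    using u adm K by (auto simp: src_less_iff block_def K_nat_def)
  have "finite {v. admissible v \<and> K_nat v = m + 2 + d \<and> length v \<le> m}"
    by (rule finite_subset[OF _ finite_lists_length_le_sym[of m]]) auto
  moreover have "finite {v \<in> block (Suc m) d. lex_less v u}"
    by (simp add: finite_block)
  ultimately show ?thesis
    unfolding class_pos_def class_count_def block_lex_rank_def split
    by (subst card_Un_disjoint) (auto simp: block_def)
qed

lemma card_lessThan_filter_half: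
  assumes "even T"
  shows "card {i \<in> {..<W}. 2 * (Q + i) < T} = min W (T div 2 - Q)"
proof -
  have "{i \<in> {..<W}. 2 * (Q + i) < T} = {..<min W (T div 2 - Q)}"
    using assms by (auto elim!: evenE)
  then show ?thesis by simp
qed

lemma sum_length_code_block:
  fixes m d :: nat
  defines "k \<equiv> m + 2 + d"
  defines "W \<equiv> card (block (Suc m) d)"
  shows "(\<Sum>u\<in>block (Suc m) d. real (length (code u))) =
    real k * real W - real (min W (class_card k div 2 - class_count k m))"
proof -
  let ?Q = "class_count k m" and ?T = "class_card k"
  let ?short = "\<lambda>i. if 2 * (?Q + i) < ?T then 1 else 0 :: real"
  have "real (length (code u)) = real k - ?short (block_lex_rank (Suc m) d u)"
    if u: "u \<in> block (Suc m) d" for u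
    using length_code_eq[of u] class_pos_block[OF u] K_nat_block[OF u] u
    by (simp add: block_def k_def of_nat_diff)
  then have "(\<Sum>u\<in>block (Suc m) d. real (length (code u))) =
      (\<Sum>u\<in>block (Suc m) d. real k - ?short (block_lex_rank (Suc m) d u))"
    by simp
  also have "\<dots> = (\<Sum>i<W. real k - ?short i)"
    unfolding W_def by (rule sum.reindex_bij_betw[OF bij_betw_block_lex_rank])
  also have "\<dots> = real k * real W - real (card {i \<in> {..<W}. 2 * (?Q + i) < ?T})"
    by (simp add: sum_subtractf sum.If_cases Int_def)
  also have "card {i \<in> {..<W}. 2 * (?Q + i) < ?T} = min W (?T div 2 - ?Q)"
    using even_class_count[of k k] class_count_eq_class_card[of k k]
    by (intro card_lessThan_filter_half) simp
  finally show ?thesis .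
qed

section \<open>Expected code length\<close>

lemma UN_block_eq: "(\<Union>d\<le>m. block (Suc m) d) = {u. admissible u \<and> length u = Suc m}"
proof (intro equalityI subsetI)
  fix u assume "u \<in> (\<Union>d\<le>m. block (Suc m) d)"
  then show "u \<in> {u. admissible u \<and> length u = Suc m}"
    by (auto simp: block_def)
next
  fix u assume u: "u \<in> {u. admissible u \<and> length u = Suc m}"
  then have "cd_steps u \<le> m"
    using cd_steps_less_length[OF admissible_nonempty, of u] by auto
  with u show "u \<in> (\<Union>d\<le>m. block (Suc m) d)"
    by (auto simp: block_def)
qed

lemma expected_len_eq_sum_blocks:
  "expected_len (Suc m) =
    (\<Sum>d\<le>m. (1/2) ^ (m + 2 + d) * (\<Sum>u\<in>block (Suc m) d. real (length (code u))))"
proof -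
  let ?f = "\<lambda>u. str_prob u * real (length (code u))"
  have "str_prob u = 0" if "length u = Suc m" "\<not> admissible u" for u
    using that str_prob_eq[of u] by (cases u) auto
  moreover have "finite {u :: sym list. length u = Suc m}"
    by (rule finite_subset[OF _ finite_lists_length_le_sym[of "Suc m"]]) auto
  ultimately have "expected_len (Suc m) = (\<Sum>u\<in>(\<Union>d\<le>m. block (Suc m) d). ?f u)"
    unfolding expected_len_def UN_block_eq by (intro sum.mono_neutral_right) auto
  also have "\<dots> = (\<Sum>d\<le>m. \<Sum>u\<in>block (Suc m) d. ?f u)"
    by (rule sum.UNION_disjoint) (auto simp: finite_block[unfolded block_def] block_def)
  also have "\<dots> = (\<Sum>d\<le>m. (1/2) ^ (m + 2 + d) * (\<Sum>u\<in>block (Suc m) d. real (length (code u))))"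
  proof (rule sum.cong[OF refl])
    fix d
    have prob: "str_prob u = (1/2) ^ (m + 2 + d)" if "u \<in> block (Suc m) d" for u
      using that str_prob_eq[of u] K_nat_block[OF that] by (simp add: block_def admissible_nonempty)
    show "(\<Sum>u\<in>block (Suc m) d. ?f u) =
        (1/2) ^ (m + 2 + d) * (\<Sum>u\<in>block (Suc m) d. real (length (code u)))"
      unfolding sum_distrib_left by (intro sum.cong refl) (simp only: prob)
  qed
  finally show ?thesis .
qed

lemma block_weight: "(1/2) ^ (m + 2 + d) * real (card (block (Suc m) d)) = real (m choose d) / 2 ^ m"
  by (simp add: card_block_Suc power_add field_simps)

lemma mean_K_nat:
  "(\<Sum>d\<le>m. (1/2) ^ (m + 2 + d) * (real (m + 2 + d) * real (card (block (Suc m) d)))) =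
    (3 * real m + 4) / 2"
proof -
  have summand: "(1/2) ^ (m + 2 + d) * (real (m + 2 + d) * real (card (block (Suc m) d))) =
      ((real m + 2) * real (m choose d) + real (d * (m choose d))) / 2 ^ m" for d
  proof -
    have "(1/2) ^ (m + 2 + d) * (real (m + 2 + d) * real (card (block (Suc m) d))) =
        real (m + 2 + d) * ((1/2) ^ (m + 2 + d) * real (card (block (Suc m) d)))"
      by (simp only: mult.left_commute)
    also have "\<dots> = real (m + 2 + d) * (real (m choose d) / 2 ^ m)"
      by (simp only: block_weight)
    finally show ?thesis
      by (simp add: field_simps)
  qed
  have "(\<Sum>d\<le>m. (1/2) ^ (m + 2 + d) * (real (m + 2 + d) * real (card (block (Suc m) d)))) =
      (\<Sum>d\<le>m. (real m + 2) * real (m choose d) + real (d * (m choose d))) / 2 ^ m"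
    by (simp only: summand sum_divide_distrib)
  also have "\<dots> = ((real m + 2) * real (\<Sum>d\<le>m. m choose d) + real (\<Sum>d\<le>m. d * (m choose d))) / 2 ^ m"
    by (simp only: sum.distrib sum_distrib_left of_nat_sum)
  also have "\<dots> = ((real m + 2) * 2 ^ m + real m * 2 ^ (m - 1)) / 2 ^ m"
    by (simp only: choose_row_sum choose_linear_sum) simp
  also have "\<dots> = (3 * real m + 4) / 2"
    by (cases m) (simp_all add: field_simps)
  finally show ?thesis .
qed

(* The probability that the codeword of X_1^(m+1) has length K - 1. *)
definition short_code_prob :: "nat \<Rightarrow> real" where
  "short_code_prob m = (\<Sum>d\<le>m. (1/2) ^ (m + 2 + d) *
     real (min (card (block (Suc m) d)) (class_card (m + 2 + d) div 2 - class_count (m + 2 + d) m)))"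

lemma expected_len_eq: "expected_len (Suc m) = (3 * real m + 4) / 2 - short_code_prob m"
proof -
  have "expected_len (Suc m) =
      (\<Sum>d\<le>m. (1/2) ^ (m + 2 + d) * (real (m + 2 + d) * real (card (block (Suc m) d)))) - short_code_prob m"
    unfolding expected_len_eq_sum_blocks sum_length_code_block short_code_prob_def
    by (simp add: right_diff_distrib sum_subtractf)
  then show ?thesis
    by (simp only: mean_K_nat)
qed

section \<open>The surplus of short codewords\<close>

(* Half of class m + 1 + c minus its strings of length at most m: the number of short codewords
   of that class left over for strings longer than m. *)
definition surplus :: "nat \<Rightarrow> nat \<Rightarrow> real" where
  "surplus m c = real (class_card (m + 1 + c)) / 2 - real (class_count (m + 1 + c) m)"

lemma surplus_0: "surplus 0 c = real (class_card (Suc c)) / 2"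
  by (simp add: surplus_def class_count_0)

lemma surplus_Suc_Suc: "surplus (Suc m) (Suc c) = surplus m (Suc c) + 2 * surplus m c"
  using class_card_Suc_Suc_Suc[of "m + c"] class_count_Suc_Suc_Suc[of "m + c" m]
  by (simp add: surplus_def algebra_simps)

lemma surplus_Suc_eq: "surplus m (Suc c) = 2 ^ (c + 2) * real (m choose c) + surplus (Suc m) c"
  by (simp add: surplus_def class_count_Suc)

lemma sum_choose_Suc_atMost:
  "(\<Sum>i\<le>c. Suc m choose i) = (\<Sum>i\<le>c. m choose i) + (\<Sum>i<c. m choose i)"
  by (induction c) (simp_all flip: lessThan_Suc_atMost)

lemma surplus_add_Suc:
  "surplus m c + surplus m (Suc c) = 2 ^ (c + 2) * real (\<Sum>i\<le>c. m choose i) - 2 ^ (m + 1 + c)"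
proof (induction m arbitrary: c)
  case 0
  have "real (class_card (Suc c)) + real (class_card (Suc (Suc c))) = 2 ^ (c + 2)"
    using class_card_add_Suc[of c] by (simp flip: of_nat_add)
  moreover have "(\<Sum>i\<le>c. (0::nat) choose i) = 1"
    by (induction c) simp_all
  ultimately show ?case
    by (simp add: surplus_0)
next
  case (Suc m)
  show ?case
  proof (cases c)
    case 0
    have "class_card (Suc (Suc (Suc m))) = class_count (Suc (Suc (Suc m))) (Suc m) + 4"
      using class_count_Suc[of "Suc (Suc (Suc m))" "Suc m"]
        class_count_eq_class_card[of "Suc (Suc (Suc m))" "Suc (Suc m)"]
      by simp
    moreover have "class_count (Suc (Suc m)) (Suc m) = class_card (Suc (Suc m))"
      by (simp add: class_count_eq_class_card)
    moreover have "real (class_card (Suc (Suc m))) + real (class_card (Suc (Suc (Suc m)))) = 2 ^ (m + 3)"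
      using class_card_add_Suc[of "Suc m"] by (simp add: power_add flip: of_nat_add)
    ultimately show ?thesis
      using 0 by (simp add: surplus_def field_simps power_add)
  next
    case (Suc c')
    have "surplus (Suc m) c + surplus (Suc m) (Suc c) =
        (surplus m c + surplus m (Suc c)) + 2 * (surplus m c' + surplus m (Suc c'))"
      using Suc by (simp add: surplus_Suc_Suc)
    also have "\<dots> = 2 ^ (c + 2) * real (\<Sum>i\<le>c. Suc m choose i) - 2 ^ (Suc m + 1 + c)"
      using Suc sum.lessThan_Suc[of "\<lambda>i. real (m choose i)" c']
      by (simp add: Suc.IH sum_choose_Suc_atMost lessThan_Suc_atMost algebra_simps)
    finally show ?thesis .
  qed
qed

lemma sum_choose_odd_half: "(\<Sum>i\<le>j. (2 * j + 1) choose i) = 4 ^ j"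
  using binomial_r_part_sum[of j] by (simp add: power_mult)

lemma sum_choose_even_half: "2 * (\<Sum>i\<le>j. (2 * j) choose i) = 4 ^ j + (2 * j choose j)"
proof -
  have "(\<Sum>i\<le>j. (2 * j) choose i) = (\<Sum>i<j. (2 * j) choose i) + (2 * j choose j)"
    by (simp flip: lessThan_Suc_atMost)
  then show ?thesis
    using sum_choose_Suc_atMost[of "2 * j" j] sum_choose_odd_half[of j] by simp
qed

lemma surplus_even_diagonal_add:
  "surplus (2 * j) j + surplus (2 * j) (Suc j) = 2 ^ (j + 1) * real (2 * j choose j)"
proof -
  have "(2::real) ^ (j + 2) * real (\<Sum>i\<le>j. (2 * j) choose i) =
      2 ^ (j + 1) * real (2 * (\<Sum>i\<le>j. (2 * j) choose i))"
    by simp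
  also have "\<dots> = 2 ^ (j + 1) * 4 ^ j + 2 ^ (j + 1) * real (2 * j choose j)"
    by (simp only: sum_choose_even_half) (simp add: algebra_simps)
  also have "(2::real) ^ (j + 1) * 4 ^ j = 2 ^ (2 * j + 1 + j)"
    by (simp add: power_add power_mult flip: power_mult_distrib)
  finally show ?thesis
    using surplus_add_Suc[of "2 * j" j] by simp
qed

lemma surplus_odd_diagonal:
  "surplus (2 * j + 1) (Suc j) = 2 ^ (j + 1) * real (2 * j choose j) + surplus (2 * j) j"
  using surplus_even_diagonal_add[of j] surplus_Suc_Suc[of "2 * j" j] by simp

lemma surplus_even_diagonal_Suc: "surplus (2 * j + 2) (Suc j) = - surplus (2 * j + 1) (Suc j)"
proof -
  have "real (\<Sum>i\<le>j. (2 * j + 1) choose i) = 4 ^ j"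
    using arg_cong[OF sum_choose_odd_half[of j], of real] by simp
  moreover have "(2::real) ^ (2 * j + 1 + 1 + j) = 2 ^ (j + 2) * 4 ^ j"
    by (simp add: power_add power_mult flip: power_mult_distrib)
  ultimately have "surplus (2 * j + 1) j + surplus (2 * j + 1) (Suc j) = 0"
    using surplus_add_Suc[of "2 * j + 1" j] by simp
  then show ?thesis
    using surplus_Suc_Suc[of "2 * j + 1" j] by simp
qed

lemma central_choose_le_odd: "(2 * j choose j) \<le> (2 * j + 1 choose j)"
  by (cases j) simp_all

lemma central_choose_le_odd_Suc: "(2 * j choose j) \<le> (2 * j + 1 choose Suc j)"
  by simp

lemma central_choose_le_Suc: "(2 * j choose j) \<le> (2 * j + 2 choose Suc j)"
  by (simp add: numeral_2_eq_2)

lemma surplus_even_diagonal_bounds: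
  "- (2 ^ j * real (2 * j choose j)) \<le> surplus (2 * j) j \<and> surplus (2 * j) j \<le> 0 \<and>
    (0 < j \<longrightarrow> surplus (2 * j) j < 0)"
proof (induction j)
  case 0
  show ?case by (simp add: surplus_0 class_card_1)
next
  case (Suc j)
  let ?C = "real (2 * j choose j)"
  have "surplus (2 * Suc j) (Suc j) = - (2 ^ Suc j * ?C + surplus (2 * j) j)"
    using surplus_even_diagonal_Suc[of j] surplus_odd_diagonal[of j] by simp
  moreover have "2 ^ Suc j * ?C \<le> 2 ^ Suc j * real (2 * Suc j choose Suc j)"
    using central_choose_le_Suc[of j] by (intro mult_left_mono) simp_all
  moreover have "2 ^ Suc j * ?C = 2 * (2 ^ j * ?C)" "0 < 2 ^ j * ?C"
    by simp_all
  ultimately show ?case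
    using Suc.IH by linarith
qed

lemma surplus_odd_diagonal_bounds:
  "2 ^ j * real (2 * j choose j) \<le> surplus (2 * j + 1) (Suc j) \<and>
    surplus (2 * j + 1) (Suc j) \<le> 2 ^ (j + 1) * real (2 * j choose j)"
  using surplus_odd_diagonal[of j] surplus_even_diagonal_bounds[of j] by simp

lemma surplus_nonneg: "m div 2 < c \<Longrightarrow> 0 \<le> surplus m c"
proof (induction m arbitrary: c)
  case 0
  then show ?case by (simp add: surplus_0)
next
  case (Suc m)
  then obtain c' where c: "c = Suc c'"
    by (cases c) auto
  show ?case
  proof (cases "even m \<and> c' = m div 2")
    case True
    then obtain j where "m = 2 * j" "c' = j"
      by auto
    then show ?thesis
      using c surplus_odd_diagonal_bounds[of j] by simp
  next
    case False
    then have "m div 2 < c'"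
      using Suc.prems c by auto
    moreover have "m div 2 < Suc c'"
      using Suc.prems c by auto
    ultimately show ?thesis
      using Suc.IH c surplus_Suc_Suc[of m c'] by simp
  qed
qed

lemma real_half_class_card_diff:
  "real (class_card (m + 1 + c) div 2 - class_count (m + 1 + c) m) = max 0 (surplus m c)"
proof -
  have "even (class_card (m + 1 + c))"
    using even_class_count[of "m + 1 + c" "m + 1 + c"] class_count_eq_class_card[of "m + 1 + c"] by simp
  then have "real (class_card (m + 1 + c) div 2) = real (class_card (m + 1 + c)) / 2"
    by (simp add: real_of_nat_div)
  then show ?thesis
    by (cases "class_count (m + 1 + c) m \<le> class_card (m + 1 + c) div 2")
      (auto simp: surplus_def of_nat_diff)
qed

(* Exactly 2^(d+2) * short_share m d of the 2^(d+2) * (m choose d) strings in block (Suc m) d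
   get a short codeword. *)
definition short_share :: "nat \<Rightarrow> nat \<Rightarrow> real" where
  "short_share m d = min (real (m choose d)) (max 0 (surplus m (Suc d)) / 2 ^ (d + 2))"

lemma short_code_prob_eq: "short_code_prob m = (\<Sum>d\<le>m. short_share m d) / 2 ^ m"
proof -
  have "(1/2) ^ (m + 2 + d) *
      real (min (card (block (Suc m) d)) (class_card (m + 2 + d) div 2 - class_count (m + 2 + d) m)) =
      short_share m d / 2 ^ m" for d
  proof -
    let ?X = "max 0 (surplus m (Suc d))"
    have "real (min (card (block (Suc m) d)) (class_card (m + 2 + d) div 2 - class_count (m + 2 + d) m)) =
        min (2 ^ (d + 2) * real (m choose d)) ?X"
      using real_half_class_card_diff[of m "Suc d"] by (simp add: card_block_Suc of_nat_min)
    also have "\<dots> = 2 ^ (d + 2) * short_share m d"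
      by (simp add: short_share_def min_mult_distrib_left)
    finally show ?thesis
      by (simp add: power_add field_simps)
  qed
  then show ?thesis
    by (simp add: short_code_prob_def sum_divide_distrib)
qed

lemma short_share_nonneg: "0 \<le> short_share m d"
  by (simp add: short_share_def)

lemma short_share_full: "Suc m div 2 < d \<Longrightarrow> short_share m d = real (m choose d)"
  using surplus_Suc_eq[of m d] surplus_nonneg[of "Suc m" d]
  by (simp add: short_share_def field_simps)

lemma short_share_partial:
  "0 \<le> surplus m (Suc d) \<Longrightarrow> surplus m (Suc d) \<le> 2 ^ (d + 2) * real (m choose d) \<Longrightarrow>
    short_share m d = surplus m (Suc d) / 2 ^ (d + 2)"
  by (simp add: short_share_def field_simps)

lemma sum_atMost_split:
  fixes f :: "nat \<Rightarrow> real"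
  shows "c \<le> m \<Longrightarrow> (\<Sum>d\<le>m. f d) = (\<Sum>d\<le>c. f d) + (\<Sum>d\<in>{c<..m}. f d)"
  by (subst sum.union_disjoint[symmetric]) (auto intro: sum.cong)

lemma sum_short_share_split:
  assumes "Suc m div 2 \<le> c" "c \<le> m"
  shows "(\<Sum>d\<le>m. short_share m d) = (\<Sum>d\<le>c. short_share m d) + (2 ^ m - real (\<Sum>d\<le>c. m choose d))"
proof -
  have "(\<Sum>d\<in>{c<..m}. short_share m d) = (\<Sum>d\<in>{c<..m}. real (m choose d))"
    using assms(1) by (intro sum.cong) (auto simp: short_share_full)
  also have "\<dots> = 2 ^ m - real (\<Sum>d\<le>c. m choose d)"
    using sum_atMost_split[OF assms(2), of "\<lambda>d. real (m choose d)"]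
      arg_cong[OF choose_row_sum[of m], of real]
    by simp
  finally show ?thesis
    using sum_atMost_split[OF assms(2), of "short_share m"] by simp
qed

lemma short_share_even_diagonal:
  "short_share (2 * j) j = real (2 * j choose j) / 2 - surplus (2 * j) j / 2 ^ (j + 2)"
proof -
  let ?C = "real (2 * j choose j)" and ?s = "surplus (2 * j) j"
  have "- (2 ^ j * ?C) \<le> ?s" "?s \<le> 0" "0 \<le> ?C"
    using surplus_even_diagonal_bounds[of j] by simp_all
  then have "0 \<le> 2 ^ (j + 1) * ?C - ?s" "2 ^ (j + 1) * ?C - ?s \<le> 2 ^ (j + 2) * ?C"
    by (simp_all add: power_add)
  then have "short_share (2 * j) j = (2 ^ (j + 1) * ?C - ?s) / 2 ^ (j + 2)"
    using surplus_even_diagonal_add[of j] short_share_partial[of "2 * j" j] by simp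
  then show ?thesis
    by (simp add: power_add field_simps)
qed

lemma sum_short_share_even:
  "4 ^ j / 2 - surplus (2 * j) j / 2 ^ (j + 2) \<le> (\<Sum>d\<le>2 * j. short_share (2 * j) d)"
proof -
  have "(\<Sum>d\<le>2 * j. short_share (2 * j) d) =
      (\<Sum>d\<le>j. short_share (2 * j) d) + (4 ^ j - real (\<Sum>d\<le>j. 2 * j choose d))"
    using sum_short_share_split[of "2 * j" j] by (simp add: power_mult)
  moreover have "short_share (2 * j) j \<le> (\<Sum>d\<le>j. short_share (2 * j) d)"
    by (rule member_le_sum) (simp_all add: short_share_nonneg)
  moreover have "real (\<Sum>d\<le>j. 2 * j choose d) = (4 ^ j + real (2 * j choose j)) / 2"
    using arg_cong[OF sum_choose_even_half[of j], of real] by simp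
  ultimately show ?thesis
    using short_share_even_diagonal[of j] by simp
qed

lemma surplus_odd_diagonal_add:
  "surplus (2 * j + 1) (Suc j) + surplus (2 * j + 1) (Suc (Suc j)) =
    2 ^ (j + 3) * real (2 * j + 1 choose Suc j)"
proof -
  have "(\<Sum>i\<le>Suc j. 2 * j + 1 choose i) = 4 ^ j + (2 * j + 1 choose Suc j)"
    using sum_choose_odd_half[of j] by simp
  moreover have "(2::real) ^ (2 * j + 1 + 1 + Suc j) = 2 ^ (Suc j + 2) * 4 ^ j"
    by (simp add: power_add power_mult flip: power_mult_distrib)
  ultimately show ?thesis
    using surplus_add_Suc[of "2 * j + 1" "Suc j"] by (simp add: power_add algebra_simps)
qed

lemma short_share_odd_diagonal:
  "short_share (2 * j + 1) j = surplus (2 * j + 1) (Suc j) / 2 ^ (j + 2)"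
proof (rule short_share_partial)
  let ?a = "surplus (2 * j + 1) (Suc j)" and ?C = "real (2 * j + 1 choose j)"
  have bounds: "2 ^ j * real (2 * j choose j) \<le> ?a" "?a \<le> 2 ^ (j + 1) * real (2 * j choose j)"
    using surplus_odd_diagonal_bounds[of j] by simp_all
  have "2 ^ (j + 1) * real (2 * j choose j) \<le> 2 ^ (j + 1) * ?C"
    using central_choose_le_odd[of j] by (intro mult_left_mono) simp_all
  moreover have "2 ^ (j + 1) * ?C \<le> 2 ^ (j + 2) * ?C"
    by (rule mult_right_mono) simp_all
  ultimately show "?a \<le> 2 ^ (j + 2) * ?C"
    using bounds(2) by linarith
  show "0 \<le> ?a"
    by (rule order_trans[OF _ bounds(1)]) simp
qed

lemma short_share_odd_diagonal_Suc:
  "short_share (2 * j + 1) (Suc j) =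
    real (2 * j + 1 choose Suc j) - surplus (2 * j + 1) (Suc j) / 2 ^ (j + 3)"
proof -
  let ?m = "2 * j + 1" and ?a = "surplus (2 * j + 1) (Suc j)" and ?C = "real (2 * j + 1 choose Suc j)"
  have bounds: "2 ^ j * real (2 * j choose j) \<le> ?a" "?a \<le> 2 ^ (j + 1) * real (2 * j choose j)"
    using surplus_odd_diagonal_bounds[of j] by simp_all
  have "2 ^ (j + 1) * real (2 * j choose j) \<le> 2 ^ (j + 1) * ?C"
    using central_choose_le_odd_Suc[of j] by (intro mult_left_mono) simp_all
  moreover have "2 ^ (j + 1) * ?C \<le> 2 ^ (j + 3) * ?C"
    by (rule mult_right_mono) (simp_all add: power_add)
  ultimately have a_le: "?a \<le> 2 ^ (j + 3) * ?C"
    using bounds(2) by linarith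
  have a_nonneg: "0 \<le> ?a"
    by (rule order_trans[OF _ bounds(1)]) simp
  have next_surplus: "surplus ?m (Suc (Suc j)) = 2 ^ (j + 3) * ?C - ?a"
    using surplus_odd_diagonal_add[of j] by linarith
  have pow: "(2::real) ^ (Suc j + 2) = 2 ^ (j + 3)"
    by (simp add: power_add)
  have "short_share ?m (Suc j) = surplus ?m (Suc (Suc j)) / 2 ^ (Suc j + 2)"
  proof (rule short_share_partial)
    show "0 \<le> surplus ?m (Suc (Suc j))"
      using a_le next_surplus by linarith
    show "surplus ?m (Suc (Suc j)) \<le> 2 ^ (Suc j + 2) * ?C"
      unfolding pow using a_nonneg next_surplus by linarith
  qed
  then show ?thesis
    unfolding pow next_surplus by (simp add: field_simps)
qed

lemma sum_short_share_odd:
  "4 ^ j + surplus (2 * j + 1) (Suc j) / 2 ^ (j + 3) \<le> (\<Sum>d\<le>2 * j + 1. short_share (2 * j + 1) d)"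
proof -
  let ?m = "2 * j + 1" and ?a = "surplus (2 * j + 1) (Suc j)"
  have "(\<Sum>d\<le>?m. short_share ?m d) =
      (\<Sum>d\<le>Suc j. short_share ?m d) + (2 * 4 ^ j - real (\<Sum>d\<le>Suc j. ?m choose d))"
    using sum_short_share_split[of ?m "Suc j"] by (simp add: power_mult)
  moreover have "short_share ?m j + short_share ?m (Suc j) \<le> (\<Sum>d\<le>Suc j. short_share ?m d)"
    using sum_mono2[of "{..Suc j}" "{j, Suc j}" "short_share ?m"] by (simp add: short_share_nonneg)
  moreover have "real (\<Sum>d\<le>Suc j. ?m choose d) = 4 ^ j + real (?m choose Suc j)"
    using arg_cong[OF sum_choose_odd_half[of j], of real] by simp
  moreover have "short_share ?m j = 2 * (?a / 2 ^ (j + 3))"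
    using short_share_odd_diagonal[of j] by (simp add: power_add field_simps)
  ultimately show ?thesis
    using short_share_odd_diagonal_Suc[of j] by linarith
qed

lemma short_code_prob_0: "short_code_prob 0 = 1/2"
  using class_card_2 by (simp add: short_code_prob_eq short_share_def surplus_0)

lemma short_code_prob_gt:
  assumes "0 < m"
  shows "1/2 < short_code_prob m"
proof (cases "even m")
  case True
  with assms obtain j where m: "m = 2 * j" and "0 < j"
    by (auto elim!: evenE)
  then have "surplus (2 * j) j < 0"
    using surplus_even_diagonal_bounds[of j] by simp
  then have "surplus (2 * j) j / 2 ^ (j + 2) < 0"
    by (intro divide_neg_pos) simp_all
  then have "4 ^ j / 2 < (\<Sum>d\<le>m. short_share m d)"
    using sum_short_share_even[of j] unfolding m by linarith
  moreover have "(2::real) ^ m = 4 ^ j"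
    by (simp add: m power_mult)
  ultimately show ?thesis
    by (simp add: short_code_prob_eq field_simps)
next
  case False
  then obtain j where m: "m = 2 * j + 1"
    using oddE by blast
  have "0 < 2 ^ j * real (2 * j choose j)"
    by simp
  then have "0 < surplus (2 * j + 1) (Suc j)"
    using surplus_odd_diagonal_bounds[of j] by linarith
  then have "0 < surplus (2 * j + 1) (Suc j) / 2 ^ (j + 3)"
    by simp
  then have "4 ^ j < (\<Sum>d\<le>m. short_share m d)"
    using sum_short_share_odd[of j] unfolding m by linarith
  moreover have "(2::real) ^ m = 2 * 4 ^ j"
    by (simp add: m power_mult)
  ultimately show ?thesis
    by (simp add: short_code_prob_eq field_simps)
qed

theorem mainTheorem13:
  "\<forall>n::nat. n \<ge> 1 \<longrightarrow>
     expected_len n \<le> 3/2 * real n \<and> (expected_len n = 3/2 * real n \<longleftrightarrow> n = 1)"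
proof (intro allI impI)
  fix n :: nat
  assume "n \<ge> 1"
  then obtain m where n: "n = Suc m"
    using not0_implies_Suc by fastforce
  have E: "expected_len n = 3/2 * real n + (1/2 - short_code_prob m)"
    using expected_len_eq[of m] by (simp add: n field_simps)
  have "1/2 \<le> short_code_prob m" and "short_code_prob m = 1/2 \<longleftrightarrow> n = 1"
    using short_code_prob_0 short_code_prob_gt[of m] n by fastforce+
  then show "expected_len n \<le> 3/2 * real n \<and> (expected_len n = 3/2 * real n \<longleftrightarrow> n = 1)"
    unfolding E by auto
qed

end
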